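(* Let $\mathbb Z\langle X\rangle$ be the free unital associative ring on $X=\{x_1,x_2,\dots\}$ and let $I$ be the left ideal of $\mathbb Z\langle X\rangle$ generated by a set $S\subset\Gamma$. Then \[I=\Gamma\cdot S\;\oplus\bigoplus_{s\ge1;\ i_1\le\dots\le i_s}x_{i_1}x_{i_2}\cdots x_{i_s}\,\Gamma\cdot S,\] where $\Gamma\cdot S$ is the left ideal of the ring $\Gamma$ generated by $S$. In particular, $I\cap\Gamma=\Gamma\cdot S$.
   Context: $\Gamma$ is the unital subring of $\mathbb Z\langle X\rangle$ generated by all left-normed commutators $[x_{i_1},\dots,x_{i_l}]$ with $l\ge2$ (where $[a,b]=ab-ba$, $[a_1,\dots,a_n]=[[a_1,\dots,a_{n-1}],a_n]$). The direct sums are of additive subgroups. *)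

theory Defs
  imports "HOL-Library.Poly_Mapping"
begin

datatype word = Word "nat list"

instantiation word :: monoid_add
begin
fun plus_word :: "word \<Rightarrow> word \<Rightarrow> word" where
  "plus_word (Word u) (Word v) = Word (u @ v)"
definition zero_word :: word where "zero_word = Word []"
instance
proof
  fix a b c :: word
  show "a + b + c = a + (b + c)" by (cases a; cases b; cases c) simp
  show "0 + a = a" by (cases a) (simp add: zero_word_def)
  show "a + 0 = a" by (cases a) (simp add: zero_word_def)
qed
end

text \<open>The free unital associative ring Z<X>: finitely supported integer
  combinations of words, with the convolution (monoid-algebra) product.\<close>
type_synonym freering = "word \<Rightarrow>\<^sub>0 int"

definition var :: "nat \<Rightarrow> freering" where
  "var i = Poly_Mapping.single (Word [i]) 1"

definition mon :: "nat list \<Rightarrow> freering" where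
  "mon is = prod_list (map var is)"

definition commut :: "freering \<Rightarrow> freering \<Rightarrow> freering" where
  "commut a b = a * b - b * a"

fun lcomm :: "nat list \<Rightarrow> freering" where
  "lcomm [] = 0"
| "lcomm (i # is) = foldl (\<lambda>a j. commut a (var j)) (var i) is"

inductive_set Gamma :: "freering set" where
  one: "1 \<in> Gamma"
| gen: "length is \<ge> 2 \<Longrightarrow> lcomm is \<in> Gamma"
| add: "a \<in> Gamma \<Longrightarrow> b \<in> Gamma \<Longrightarrow> a + b \<in> Gamma"
| neg: "a \<in> Gamma \<Longrightarrow> - a \<in> Gamma"
| mult: "a \<in> Gamma \<Longrightarrow> b \<in> Gamma \<Longrightarrow> a * b \<in> Gamma"

inductive_set left_ideal_in :: "freering set \<Rightarrow> freering set \<Rightarrow> freering set"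
  for R S where
  zero: "0 \<in> left_ideal_in R S"
| gen: "r \<in> R \<Longrightarrow> s \<in> S \<Longrightarrow> r * s \<in> left_ideal_in R S"
| add: "a \<in> left_ideal_in R S \<Longrightarrow> b \<in> left_ideal_in R S \<Longrightarrow> a + b \<in> left_ideal_in R S"

definition summand :: "freering set \<Rightarrow> nat list \<Rightarrow> freering set" where
  "summand S is = {mon is * a | a. a \<in> left_ideal_in Gamma S}"

end

theory Submission
  imports Defs
begin

text \<open>Every element of \<open>\<int>\<langle>X\<rangle>\<close> can be straightened into a sum of terms \<open>x\<^sub>w g\<^sub>w\<close> over
  nondecreasing words \<open>w\<close> with \<open>g\<^sub>w \<in> \<Gamma>\<close>: moving a letter to the left past a smaller one, or
  an element of \<open>\<Gamma>\<close> to the right past a letter, costs only a commutator term of lower degree whose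
  commutator factor lies in \<open>\<Gamma>\<close>. Such an expansion is unique. The partial derivatives
  \<open>\<partial>\<^sub>i\<close> (the derivations with \<open>\<partial>\<^sub>i x\<^sub>j = \<delta>\<^sub>i\<^sub>j\<close>) vanish on \<open>\<Gamma>\<close>, and applying \<open>\<partial>\<^sub>i\<close>
  to a sorted expansion deletes one \<open>x\<^sub>i\<close> from every word containing it, with the multiplicity of
  \<open>x\<^sub>i\<close> as factor; since \<open>\<int>\<langle>X\<rangle>\<close> is torsion free, induction on the degree shows that a vanishing
  expansion has vanishing coefficients. Multiplying on the right by elements of \<open>S\<close> gives the
  decomposition of \<open>I\<close>, and comparing the coefficient of the empty word gives \<open>I \<inter> \<Gamma> = \<Gamma>\<cdot>S\<close>.\<close>

lemma commut_mult_swap: "a * (b * c) = b * (a * c) + commut a b * c"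
  by (simp add: commut_def algebra_simps)

definition family_sums :: "('i \<Rightarrow> 'a::comm_monoid_add set) \<Rightarrow> 'i set \<Rightarrow> 'a set" where
  "family_sums A P = {sum f F | F f. finite F \<and> F \<subseteq> P \<and> (\<forall>w\<in>F. f w \<in> A w)}"

lemma family_sums_0: "0 \<in> family_sums A P"
  unfolding family_sums_def by (rule CollectI, rule exI[of _ "{}"]) simp

lemma family_sums_single: "w \<in> P \<Longrightarrow> x \<in> A w \<Longrightarrow> x \<in> family_sums A P"
  unfolding family_sums_def by (rule CollectI, rule exI[of _ "{w}"], rule exI[of _ "\<lambda>_. x"]) simp

lemma family_sums_add:
  assumes "\<And>w. 0 \<in> A w" "\<And>w x y. x \<in> A w \<Longrightarrow> y \<in> A w \<Longrightarrow> x + y \<in> A w"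
    and "x \<in> family_sums A P" "y \<in> family_sums A P"
  shows "x + y \<in> family_sums A P"
proof -
  obtain F f where F: "x = sum f F" "finite F" "F \<subseteq> P" "\<forall>w\<in>F. f w \<in> A w"
    using assms(3) unfolding family_sums_def by blast
  obtain G g where G: "y = sum g G" "finite G" "G \<subseteq> P" "\<forall>w\<in>G. g w \<in> A w"
    using assms(4) unfolding family_sums_def by blast
  define h where "h w = (if w \<in> F then f w else 0) + (if w \<in> G then g w else 0)" for w
  have "x + y = sum h (F \<union> G)"
    using F G by (simp add: h_def sum.distrib sum.If_cases Int_absorb1 Int_absorb2)
  moreover have "\<forall>w\<in>F \<union> G. h w \<in> A w"
    using F G assms(1,2) by (auto simp: h_def)
  ultimately show ?thesis
    using F G unfolding family_sums_def by blast
qed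

lemma left_ideal_in_mono:
  assumes "R \<subseteq> R'"
  shows "left_ideal_in R S \<subseteq> left_ideal_in R' S"
proof
  fix a assume "a \<in> left_ideal_in R S"
  then show "a \<in> left_ideal_in R' S"
    by induction (use assms in \<open>auto intro: left_ideal_in.intros\<close>)
qed

lemma left_ideal_in_UNIV_mult: "a \<in> left_ideal_in UNIV S \<Longrightarrow> c * a \<in> left_ideal_in UNIV S"
proof (induction rule: left_ideal_in.induct)
  case (gen r s)
  then show ?case using left_ideal_in.gen[of "c * r" UNIV s S] by (simp add: mult.assoc)
qed (auto simp: distrib_left intro: left_ideal_in.intros)

lemma left_ideal_in_sum:
  "finite F \<Longrightarrow> \<forall>w\<in>F. f w \<in> left_ideal_in R S \<Longrightarrow> sum f F \<in> left_ideal_in R S"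
  by (induction F rule: finite_induct) (auto intro: left_ideal_in.zero left_ideal_in.add)

section \<open>Partial derivatives\<close>

lemma mon_eq_frag_of: "mon ws = frag_of (Word ws)"
  by (induction ws) (simp_all add: mon_def var_def mult_single zero_word_def[symmetric])

lemma mon_Nil [simp]: "mon [] = 1"
  and mon_Cons: "mon (j # ws) = var j * mon ws"
  and mon_append: "mon (u @ v) = mon u * mon v"
  by (simp_all add: mon_def)

fun der_word :: "nat \<Rightarrow> nat list \<Rightarrow> freering" where
  "der_word i [] = 0"
| "der_word i (j # ws) = (if i = j then mon ws else 0) + var j * der_word i ws"

definition der :: "nat \<Rightarrow> freering \<Rightarrow> freering" where
  "der i = frag_extend (\<lambda>w. case w of Word ws \<Rightarrow> der_word i ws)"

lemma der_mon: "der i (mon ws) = der_word i ws"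
  by (simp add: der_def mon_eq_frag_of)

lemma der_add: "der i (a + b) = der i a + der i b"
  and der_diff: "der i (a - b) = der i a - der i b"
  and der_minus: "der i (- a) = - der i a"
  and der_0 [simp]: "der i 0 = 0"
  by (simp_all add: der_def frag_extend_add frag_extend_diff frag_extend_minus)

lemma der_sum: "finite A \<Longrightarrow> der i (sum f A) = (\<Sum>a\<in>A. der i (f a))"
  by (simp add: der_def frag_extend_sum)

lemma der_word_append: "der_word i (u @ v) = der_word i u * mon v + mon u * der_word i v"
  by (induction u) (simp_all add: mon_Cons mon_append algebra_simps)

lemma der_mult: "der i (a * b) = der i a * b + a * der i b"
proof -
  have frag_of_case: "der i (frag_of x * b) = der i (frag_of x) * b + frag_of x * der i b" for x
    using subset_UNIV
  proof (induction b rule: frag_induction)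
    case (one y)
    obtain u v where "x = Word u" "y = Word v" by (cases x, cases y) auto
    then show ?case
      by (simp only: mon_eq_frag_of[symmetric] mon_append[symmetric] der_mon der_word_append)
  qed (simp_all add: der_diff algebra_simps)
  show ?thesis
    using subset_UNIV
    by (induction a rule: frag_induction) (simp_all add: frag_of_case der_diff algebra_simps)
qed

lemma der_one [simp]: "der i 1 = 0"
  using der_mon[of i "[]"] by simp

lemma der_var: "der i (var j) = (if i = j then 1 else 0)"
  using der_mon[of i "[j]"] by (simp add: mon_def)

lemma der_of_nat [simp]: "der i (of_nat n) = 0"
  by (induction n) (simp_all add: der_add)

lemma Cons_remove1_sorted:
  assumes "sorted (i # ws)" "i \<in> set ws"
  shows "i # remove1 i ws = ws"
  using assms by (cases ws) auto

lemma der_mon_sorted: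
  "sorted ws \<Longrightarrow> der i (mon ws) = of_nat (count_list ws i) * mon (remove1 i ws)"
  unfolding der_mon
proof (induction ws)
  case (Cons j ws)
  have "var j * (of_nat c * m) = of_nat c * (var j * m)" for c m
    by (metis mult.assoc mult_of_nat_commute)
  moreover have "i = j \<Longrightarrow> of_nat (count_list ws i) * mon (i # remove1 i ws)
                           = of_nat (count_list ws i) * mon ws"
    using Cons.prems Cons_remove1_sorted[of i ws]
    by (cases "i \<in> set ws") (auto simp: count_list_0_iff)
  ultimately show ?case
    using Cons by (simp add: mon_Cons algebra_simps)
qed simp

definition constants :: "freering set" where
  "constants = {a. \<forall>i. der i a = 0}"

lemma der_commut_var: "der i (commut a (var j)) = commut (der i a) (var j)"
  by (simp add: commut_def der_diff der_mult der_var)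

lemma lcomm_snoc: "is \<noteq> [] \<Longrightarrow> lcomm (is @ [k]) = commut (lcomm is) (var k)"
  by (cases "is") simp_all

lemma der_lcomm: "2 \<le> length is \<Longrightarrow> der i (lcomm is) = 0"
proof (induction "is" rule: rev_induct)
  case (snoc k js)
  then have "js \<noteq> []" by auto
  moreover have "length js = 1 \<or> 2 \<le> length js"
    using \<open>js \<noteq> []\<close> by (cases js) (auto simp: Suc_le_eq)
  ultimately have "der i (lcomm js) \<in> {0, 1}"
    using snoc by (auto simp: length_Suc_conv der_var)
  then show ?case
    using \<open>js \<noteq> []\<close> by (auto simp: lcomm_snoc der_commut_var) (simp_all add: commut_def)
qed simp

lemma Gamma_subset_constants: "Gamma \<subseteq> constants"
proof
  fix g assume "g \<in> Gamma"
  then show "g \<in> constants"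
    by induction (simp_all add: constants_def der_lcomm der_add der_minus der_mult)
qed

lemma Gamma_zero: "0 \<in> Gamma"
  using Gamma.add[OF Gamma.one Gamma.neg[OF Gamma.one]] by simp

lemma commut_var_var_Gamma: "commut (var k) (var i) \<in> Gamma"
  using Gamma.gen[of "[k, i]"] by simp

lemma commut_var_Gamma: "g \<in> Gamma \<Longrightarrow> commut g (var k) \<in> Gamma"
proof (induction rule: Gamma.induct)
  case one
  then show ?case by (simp add: commut_def Gamma_zero)
next
  case (gen "is")
  then show ?case
    using Gamma.gen[of "is @ [k]"] lcomm_snoc[of "is" k] by fastforce
next
  case (add a b)
  have "commut (a + b) (var k) = commut a (var k) + commut b (var k)"
    by (simp add: commut_def algebra_simps)
  then show ?case using add Gamma.add by simp
next
  case (neg a)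
  have "commut (- a) (var k) = - commut a (var k)"
    by (simp add: commut_def algebra_simps)
  then show ?case using neg Gamma.neg by simp
next
  case (mult a b)
  have "commut (a * b) (var k) = a * commut b (var k) + commut a (var k) * b"
    by (simp add: commut_def algebra_simps)
  then show ?case using mult Gamma.add Gamma.mult by simp
qed

section \<open>Straightening into sorted expansions\<close>

inductive_set pbw_span :: "nat \<Rightarrow> nat \<Rightarrow> freering set" for n m where
  zero: "0 \<in> pbw_span n m"
| gen: "sorted is \<Longrightarrow> length is \<le> n \<Longrightarrow> \<forall>j\<in>set is. m \<le> j \<Longrightarrow> g \<in> Gamma
        \<Longrightarrow> mon is * g \<in> pbw_span n m"
| add: "a \<in> pbw_span n m \<Longrightarrow> b \<in> pbw_span n m \<Longrightarrow> a + b \<in> pbw_span n m"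

lemma pbw_span_mono: "a \<in> pbw_span n m \<Longrightarrow> n \<le> n' \<Longrightarrow> m' \<le> m \<Longrightarrow> a \<in> pbw_span n' m'"
  by (induction rule: pbw_span.induct) (auto intro: pbw_span.zero pbw_span.add intro!: pbw_span.gen)

lemma pbw_span_mult_Gamma: "a \<in> pbw_span n m \<Longrightarrow> g \<in> Gamma \<Longrightarrow> a * g \<in> pbw_span n m"
  by (induction rule: pbw_span.induct)
     (auto simp: mult.assoc distrib_right intro: pbw_span.intros Gamma.mult)

lemma var_mult_pbw_span_prepend:
  "a \<in> pbw_span n i \<Longrightarrow> m \<le> i \<Longrightarrow> var i * a \<in> pbw_span (Suc n) m"
proof (induction rule: pbw_span.induct)
  case (gen "is" g)
  have "mon (i # is) * g \<in> pbw_span (Suc n) m"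
    using gen by (intro pbw_span.gen) auto
  then show ?case by (simp add: mon_Cons mult.assoc)
qed (auto simp: distrib_left intro: pbw_span.intros)

lemma var_mult_pbw_span_from_generators:
  assumes "a \<in> pbw_span n m"
    and "\<And>is. sorted is \<Longrightarrow> length is \<le> n \<Longrightarrow> \<forall>j\<in>set is. m \<le> j
             \<Longrightarrow> var k * mon is \<in> pbw_span (Suc n) m"
  shows "var k * a \<in> pbw_span (Suc n) m"
  using assms(1)
proof (induction rule: pbw_span.induct)
  case (gen "is" g)
  then show ?case
    using assms(2) pbw_span_mult_Gamma by (simp add: mult.assoc[symmetric])
qed (auto simp: distrib_left intro: pbw_span.intros)

lemma var_mult_mon_sorted_in_pbw_span:
  assumes "sorted (k # is)" "length is \<le> n" "m \<le> k"
  shows "var k * mon is \<in> pbw_span (Suc n) m"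
proof -
  have "mon (k # is) * 1 \<in> pbw_span (Suc n) m"
    using assms by (intro pbw_span.gen Gamma.one) auto
  then show ?thesis by (simp add: mon_Cons)
qed

lemma var_mult_mon_in_pbw_span_step:
  assumes IH_var: "\<And>a m k. a \<in> pbw_span n m \<Longrightarrow> m \<le> k \<Longrightarrow> var k * a \<in> pbw_span (Suc n) m"
    and IH_Gamma: "\<And>g ws m. g \<in> Gamma \<Longrightarrow> \<forall>j\<in>set ws. m \<le> j \<Longrightarrow> length ws \<le> n
                     \<Longrightarrow> g * mon ws \<in> pbw_span n m"
    and "is": "sorted is" "length is \<le> Suc n" "\<forall>j\<in>set is. m \<le> j" and "m \<le> k"
  shows "var k * mon is \<in> pbw_span (Suc (Suc n)) m"
proof (cases "sorted (k # is)")
  case True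
  then show ?thesis using "is" \<open>m \<le> k\<close> by (auto intro: var_mult_mon_sorted_in_pbw_span)
next
  case False
  then obtain i rest where is_Cons: "is = i # rest" and "i < k"
    using "is" by (cases "is") auto
  have "mon rest * 1 \<in> pbw_span n i"
    using "is" is_Cons by (intro pbw_span.gen Gamma.one) auto
  then have "var k * mon rest \<in> pbw_span (Suc n) i"
    using IH_var \<open>i < k\<close> by simp
  then have "var i * (var k * mon rest) \<in> pbw_span (Suc (Suc n)) m"
    by (rule var_mult_pbw_span_prepend) (use "is" is_Cons in auto)
  moreover have "commut (var k) (var i) * mon rest \<in> pbw_span n m"
    using IH_Gamma[OF commut_var_var_Gamma, of rest m] "is" is_Cons by simp
  then have "commut (var k) (var i) * mon rest \<in> pbw_span (Suc (Suc n)) m"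
    by (rule pbw_span_mono) simp_all
  ultimately show ?thesis
    unfolding is_Cons mon_Cons commut_mult_swap[of "var k"] by (rule pbw_span.add)
qed

lemma pbw_span_straighten:
  shows "a \<in> pbw_span n m \<Longrightarrow> m \<le> k \<Longrightarrow> var k * a \<in> pbw_span (Suc n) m"
    and "g \<in> Gamma \<Longrightarrow> \<forall>j\<in>set ws. m \<le> j \<Longrightarrow> length ws \<le> n
          \<Longrightarrow> g * mon ws \<in> pbw_span n m"
proof (induction n arbitrary: a m k g ws)
  case 0
  {
    case 1
    from 1(1) show ?case
      by (rule var_mult_pbw_span_from_generators)
         (use 1(2) in \<open>auto simp del: mon_Nil intro!: var_mult_mon_sorted_in_pbw_span\<close>)
  next
    case 2
    then show ?case using pbw_span.gen[of "[]" 0 m g] by simp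
  }
next
  case (Suc n)
  {
    case 1
    from 1(1) show ?case
    proof (rule var_mult_pbw_span_from_generators)
      show "var k * mon is \<in> pbw_span (Suc (Suc n)) m"
        if "sorted is" "length is \<le> Suc n" "\<forall>j\<in>set is. m \<le> j" for "is"
        using Suc.IH that 1(2) by (rule var_mult_mon_in_pbw_span_step)
    qed
  next
    case 2
    show ?case
    proof (cases ws)
      case Nil
      then show ?thesis using pbw_span.gen[of "[]" "Suc n" m g] 2 by simp
    next
      case (Cons k ws')
      have "g * mon ws' \<in> pbw_span n m" and "commut g (var k) * mon ws' \<in> pbw_span n m"
        using Suc.IH(2) 2 Cons commut_var_Gamma by auto
      then have "var k * (g * mon ws') \<in> pbw_span (Suc n) m"
        and "commut g (var k) * mon ws' \<in> pbw_span (Suc n) m"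
        using Suc.IH(1) 2 Cons by (auto elim: pbw_span_mono)
      then show ?thesis
        unfolding Cons mon_Cons commut_mult_swap[of g] by (rule pbw_span.add)
    qed
  }
qed

lemma exists_pbw_span: "\<exists>n. r \<in> pbw_span n 0"
  using subset_UNIV
proof (induction r rule: frag_induction)
  case zero
  then show ?case using pbw_span.zero by blast
next
  case (one x)
  obtain ws where "x = Word ws" by (cases x)
  then have "1 * mon ws \<in> pbw_span (length ws) 0"
    by (intro pbw_span_straighten(2) Gamma.one) simp_all
  then show ?case using \<open>x = Word ws\<close> by (auto simp: mon_eq_frag_of)
next
  case (diff a b)
  then obtain n1 n2 where "a \<in> pbw_span n1 0" "b \<in> pbw_span n2 0" by blast
  then have a: "a \<in> pbw_span (max n1 n2) 0" and b: "b \<in> pbw_span (max n1 n2) 0"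
    by (auto elim: pbw_span_mono)
  have "a + b * (- 1) \<in> pbw_span (max n1 n2) 0"
    by (rule pbw_span.add[OF a pbw_span_mult_Gamma[OF b Gamma.neg[OF Gamma.one]]])
  then show ?case by auto
qed

section \<open>Uniqueness of sorted expansions\<close>

lemma freering_torsion_free:
  fixes g :: freering
  assumes "of_nat c * g = 0" "0 < c"
  shows "g = 0"
proof (rule poly_mapping_eqI)
  fix k
  have "of_nat c * g = Poly_Mapping.map ((*) (of_nat c)) g"
    by (simp add: mult_map_scale_conv_mult)
  then have "Poly_Mapping.lookup (of_nat c * g) k = of_nat c * Poly_Mapping.lookup g k"
    by (simp add: Poly_Mapping.map.rep_eq when_def)
  then show "Poly_Mapping.lookup g k = Poly_Mapping.lookup 0 k" using assms by simp
qed

lemma sum_mon_eq_0_imp_coeff_Nil_eq_0: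
  assumes "finite F" "(\<Sum>w\<in>F. mon w * g w) = 0" "\<forall>w\<in>F. w \<noteq> [] \<longrightarrow> g w = 0"
  shows "\<forall>w\<in>F. g w = 0"
proof -
  have "(\<Sum>w\<in>F. mon w * g w) = (\<Sum>w\<in>F. if w = [] then g [] else 0)"
    using assms(3) by (intro sum.cong) auto
  then show ?thesis using assms by (auto split: if_splits)
qed

text \<open>A sorted word containing \<open>i\<close> is recovered from the word with one \<open>i\<close> removed by \<open>insort i\<close>,
  so the derivative is again a sorted expansion, of lower degree.\<close>
lemma der_sum_mon_constants:
  assumes fin: "finite F" and sorted: "\<forall>w\<in>F. sorted w" and const: "\<forall>w\<in>F. g w \<in> constants"
  shows "der i (\<Sum>w\<in>F. mon w * g w) =
    (\<Sum>u\<in>remove1 i ` {w\<in>F. i \<in> set w}. mon u * (of_nat (count_list (insort i u) i) * g (insort i u)))"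
proof -
  let ?Fi = "{w\<in>F. i \<in> set w}"
  have inv: "insort i (remove1 i w) = w" if "w \<in> ?Fi" for w
    using that sorted by (simp add: insort_remove1)
  have "der i (\<Sum>w\<in>F. mon w * g w) = (\<Sum>w\<in>F. of_nat (count_list w i) * mon (remove1 i w) * g w)"
    using fin sorted const by (simp add: der_sum der_mult der_mon_sorted constants_def)
  also have "\<dots> = (\<Sum>w\<in>?Fi. of_nat (count_list w i) * mon (remove1 i w) * g w)"
    using fin by (intro sum.mono_neutral_right) (auto simp: count_list_0_iff)
  also have "\<dots> = (\<Sum>w\<in>?Fi. mon (remove1 i w) * (of_nat (count_list w i) * g w))"
    by (simp add: mult_of_nat_commute mult.assoc)
  also have "\<dots> = (\<Sum>u\<in>remove1 i ` ?Fi. mon u * (of_nat (count_list (insort i u) i) * g (insort i u)))"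
    by (subst sum.reindex) (auto intro: inj_on_inverseI[of _ "insort i"] simp: inv)
  finally show ?thesis .
qed

lemma sum_mon_constants_eq_0_bounded:
  assumes "finite F" "\<forall>w\<in>F. sorted w \<and> length w \<le> N" "\<forall>w\<in>F. g w \<in> constants"
    and "(\<Sum>w\<in>F. mon w * g w) = 0"
  shows "\<forall>w\<in>F. g w = 0"
  using assms
proof (induction N arbitrary: F g)
  case 0
  then show ?case by (intro sum_mon_eq_0_imp_coeff_Nil_eq_0) auto
next
  case (Suc N)
  have "g v = 0" if "v \<in> F" "v \<noteq> []" for v
  proof -
    define i where "i = hd v"
    define F' where "F' = remove1 i ` {w\<in>F. i \<in> set w}"
    define g' where "g' u = of_nat (count_list (insort i u) i) * g (insort i u)" for u
    have "i \<in> set v" using \<open>v \<noteq> []\<close> by (simp add: i_def)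
    have "(\<Sum>u\<in>F'. mon u * g' u) = 0"
      using der_sum_mon_constants[of F g i] Suc.prems by (simp add: F'_def g'_def)
    moreover have "\<forall>u\<in>F'. sorted u \<and> length u \<le> N"
      using Suc.prems(2) by (auto simp: F'_def length_remove1 sorted_remove1)
    moreover have "insort i u \<in> F" if "u \<in> F'" for u
      using that Suc.prems(2) by (auto simp: F'_def insort_remove1)
    then have "\<forall>u\<in>F'. g' u \<in> constants"
      using Suc.prems(3) by (simp add: g'_def constants_def der_mult)
    moreover have "finite F'"
      using Suc.prems(1) by (simp add: F'_def)
    ultimately have "\<forall>u\<in>F'. g' u = 0"
      using Suc.IH[of F' g'] by blast
    moreover have "remove1 i v \<in> F'"
      using that \<open>i \<in> set v\<close> by (auto simp: F'_def)
    moreover have "insort i (remove1 i v) = v"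
      using that \<open>i \<in> set v\<close> Suc.prems(2) by (simp add: insort_remove1)
    ultimately have "of_nat (count_list v i) * g v = 0"
      by (metis g'_def)
    then show "g v = 0"
      by (rule freering_torsion_free) (use \<open>i \<in> set v\<close> count_list_0_iff in \<open>metis gr0I\<close>)
  qed
  then show ?case using Suc.prems by (intro sum_mon_eq_0_imp_coeff_Nil_eq_0) auto
qed

lemma sum_mon_constants_eq_0:
  assumes "finite F" "\<forall>w\<in>F. sorted w" "\<forall>w\<in>F. g w \<in> constants"
    and "(\<Sum>w\<in>F. mon w * g w) = 0"
  shows "\<forall>w\<in>F. g w = 0"
  using assms sum_mon_constants_eq_0_bounded[of F "Max (length ` F)" g] by simp

lemma constant_eq_sum_mon:
  assumes "finite F" "\<forall>w\<in>F. sorted w" "\<forall>w\<in>F. g w \<in> constants" "x \<in> constants"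
    and "x = (\<Sum>w\<in>F. mon w * g w)"
  shows "x = (if [] \<in> F then g [] else 0)"
proof -
  define h where "h w = (if w \<in> F then g w else 0) - (if w = [] then x else 0)" for w
  have "(\<Sum>w\<in>insert [] F. mon w * h w) =
    (\<Sum>w\<in>insert [] F. mon w * (if w \<in> F then g w else 0)) - (\<Sum>w\<in>insert [] F. if w = [] then x else 0)"
    unfolding sum_subtractf[symmetric] by (intro sum.cong) (auto simp: h_def right_diff_distrib)
  also have "(\<Sum>w\<in>insert [] F. mon w * (if w \<in> F then g w else 0)) = x"
    unfolding assms(5) using assms(1) by (intro sum.mono_neutral_cong_right) auto
  also have "(\<Sum>w\<in>insert [] F. if w = [] then x else 0) = x"
    using assms(1) by simp
  finally have "\<forall>w\<in>insert [] F. h w = 0"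
    using assms(1-4) by (intro sum_mon_constants_eq_0) (auto simp: h_def constants_def der_diff)
  then show ?thesis by (auto simp: h_def)
qed

section \<open>The decomposition of the left ideal\<close>

lemma left_ideal_in_Gamma_subset:
  assumes "S \<subseteq> Gamma"
  shows "left_ideal_in Gamma S \<subseteq> Gamma"
proof
  fix a assume "a \<in> left_ideal_in Gamma S"
  then show "a \<in> Gamma"
    by induction (use assms in \<open>auto intro: Gamma_zero Gamma.add Gamma.mult\<close>)
qed

lemma summand_add: "x \<in> summand S w \<Longrightarrow> y \<in> summand S w \<Longrightarrow> x + y \<in> summand S w"
  unfolding summand_def by (auto simp: distrib_left[symmetric] intro: left_ideal_in.add)

lemma summand_0: "0 \<in> summand S w"
  unfolding summand_def using left_ideal_in.zero by force

lemma summand_subset_left_ideal: "summand S w \<subseteq> left_ideal_in UNIV S"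
  unfolding summand_def
  using left_ideal_in_mono[of Gamma UNIV S] left_ideal_in_UNIV_mult by blast

lemma family_sums_summand_add:
  "x \<in> family_sums (summand S) P \<Longrightarrow> y \<in> family_sums (summand S) P
    \<Longrightarrow> x + y \<in> family_sums (summand S) P"
  by (rule family_sums_add[OF summand_0 summand_add])

lemma pbw_span_mult_in_family_sums:
  "a \<in> pbw_span n m \<Longrightarrow> s \<in> S \<Longrightarrow> a * s \<in> family_sums (summand S) {is. sorted is}"
proof (induction rule: pbw_span.induct)
  case (gen "is" g)
  then have "mon is * (g * s) \<in> summand S is"
    by (auto simp: summand_def intro: left_ideal_in.gen)
  then show ?case
    using gen by (auto simp: mult.assoc intro: family_sums_single)
next
  case (add a b)
  then show ?case by (simp add: distrib_right family_sums_summand_add)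
qed (simp add: family_sums_0)

lemma left_ideal_in_UNIV_eq_family_sums:
  "left_ideal_in UNIV S = family_sums (summand S) {is. sorted is}"
proof
  show "left_ideal_in UNIV S \<subseteq> family_sums (summand S) {is. sorted is}"
  proof
    fix x assume "x \<in> left_ideal_in UNIV S"
    then show "x \<in> family_sums (summand S) {is. sorted is}"
    proof induction
      case zero
      then show ?case by (rule family_sums_0)
    next
      case (gen r s)
      obtain n where "r \<in> pbw_span n 0" using exists_pbw_span by blast
      then show ?case using gen(2) by (rule pbw_span_mult_in_family_sums)
    next
      case (add a b)
      then show ?case by (simp add: family_sums_summand_add)
    qed
  qed
  show "family_sums (summand S) {is. sorted is} \<subseteq> left_ideal_in UNIV S"
    unfolding family_sums_def using left_ideal_in_sum summand_subset_left_ideal by fastforce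
qed

lemma summand_coeffs:
  assumes "\<forall>w\<in>F. f w \<in> summand S w"
  obtains a where "\<forall>w\<in>F. f w = mon w * a w \<and> a w \<in> left_ideal_in Gamma S"
proof -
  have "\<forall>w\<in>F. \<exists>a. f w = mon w * a \<and> a \<in> left_ideal_in Gamma S"
    using assms unfolding summand_def by blast
  then show thesis using that by metis
qed

lemma family_sums_summand_independent:
  assumes "S \<subseteq> Gamma" "finite F" "F \<subseteq> {is. sorted is}" "\<forall>w\<in>F. f w \<in> summand S w"
    and "sum f F = 0"
  shows "\<forall>w\<in>F. f w = 0"
proof -
  obtain a where a: "\<forall>w\<in>F. f w = mon w * a w \<and> a w \<in> left_ideal_in Gamma S"
    using assms(4) by (rule summand_coeffs)
  then have "\<forall>w\<in>F. a w \<in> constants"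
    using left_ideal_in_Gamma_subset[OF assms(1)] Gamma_subset_constants by blast
  moreover have "(\<Sum>w\<in>F. mon w * a w) = 0"
    using a assms(5) by (metis (no_types, lifting) sum.cong)
  ultimately have "\<forall>w\<in>F. a w = 0"
    using assms(2,3) by (intro sum_mon_constants_eq_0) auto
  then show ?thesis using a by simp
qed

lemma left_ideal_in_UNIV_Int_Gamma:
  assumes "S \<subseteq> Gamma"
  shows "left_ideal_in UNIV S \<inter> Gamma = left_ideal_in Gamma S"
proof
  show "left_ideal_in Gamma S \<subseteq> left_ideal_in UNIV S \<inter> Gamma"
    using left_ideal_in_mono[of Gamma UNIV S] left_ideal_in_Gamma_subset[OF assms] by blast
  show "left_ideal_in UNIV S \<inter> Gamma \<subseteq> left_ideal_in Gamma S"
  proof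
    fix x assume x: "x \<in> left_ideal_in UNIV S \<inter> Gamma"
    then obtain F f where F: "x = sum f F" "finite F" "F \<subseteq> {is. sorted is}" "\<forall>w\<in>F. f w \<in> summand S w"
      by (auto simp: left_ideal_in_UNIV_eq_family_sums family_sums_def)
    obtain a where a: "\<forall>w\<in>F. f w = mon w * a w \<and> a w \<in> left_ideal_in Gamma S"
      using F(4) by (rule summand_coeffs)
    have "x = (\<Sum>w\<in>F. mon w * a w)"
      using F(1) a by simp
    then have "x = (if [] \<in> F then a [] else 0)"
      using F(2,3) a x left_ideal_in_Gamma_subset[OF assms] Gamma_subset_constants
      by (intro constant_eq_sum_mon) auto
    then show "x \<in> left_ideal_in Gamma S"
      using a by (auto intro: left_ideal_in.zero)
  qed
qed

theorem lemma2p4: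
  fixes S :: "freering set"
  assumes "S \<subseteq> Gamma"
  shows "left_ideal_in UNIV S =
           {sum f F | F f. finite F \<and> F \<subseteq> {is. sorted is} \<and>
                           (\<forall>w\<in>F. f w \<in> summand S w)}
         \<and> (\<forall>F f. finite F \<and> F \<subseteq> {is. sorted is} \<and> (\<forall>w\<in>F. f w \<in> summand S w)
              \<and> sum f F = 0 \<longrightarrow> (\<forall>w\<in>F. f w = 0))
         \<and> left_ideal_in UNIV S \<inter> Gamma = left_ideal_in Gamma S"
  using left_ideal_in_UNIV_eq_family_sums[of S] family_sums_summand_independent[OF assms]
    left_ideal_in_UNIV_Int_Gamma[OF assms]
  unfolding family_sums_def by blast

end
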